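(* Let $T=(L,R,\tau,\sigma)$ be a rewrite rule and $m:L\to G$ a matching with respect to $T$. Let $(\mathcal{H},\tau_1,\delta)$ be a pushout of $\tau:|L|\to|R|$ and $|m|:|L|\to|G|$ in the category of sets, with $\tau_1:|G|\to\mathcal{H}$, $\delta:|R|\to\mathcal{H}$, $\delta\circ\tau=\tau_1\circ|m|$. Let $\Gamma=|G|-|m(L)|$, $\Sigma=\mathrm{dom}(\sigma)$, $\Delta=|R|-\Sigma$. Then $\mathcal{H}$ is the disjoint union $\mathcal{H}=\tau_1(\Gamma)+\delta(\Delta)+\delta(\Sigma)$, where the restriction $\tau_1:\Gamma\to\tau_1(\Gamma)$ is bijective, the restriction $\delta:\Delta\to\delta(\Delta)$ is bijective, and for distinct nodes $n,n'\in\Sigma$ with $\delta(n)=\delta(n')$ one has $\sigma(n)=\sigma(n')$. In addition, there is a unique partial function $\sigma_1:\mathcal{H}\rightharpoonup|G|$ with domain $\delta(\Sigma)$ such that $|m|\circ\sigma=\sigma_1\circ\delta$ on $\Sigma$.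
   Context: A signature $\Omega$ assigns an arity to each symbol; for a function $f$, $f^*$ acts letterwise on strings. A termgraph (graph) $G$ has node set $|G|$, a subset of labeled nodes, a labeling $\mathcal{L}_G$ of labeled nodes by symbols of $\Omega$ and a successor function $\mathcal{S}_G$ giving each labeled node a string of nodes of length the arity of its label. A graph morphism $g:G\to H$ is a function $|G|\to|H|$ sending labeled nodes to labeled nodes with $\mathcal{L}_H(g(n))=\mathcal{L}_G(n)$ and $\mathcal{S}_H(g(n))=g^*(\mathcal{S}_G(n))$ for each labeled $n$; $|g|$ denotes its underlying function. For graphs $G,H$ and a function $\tau:|G|\to|H|$, a node $p\in|H|$ is a $\tau$-clone of $q\in|G|$ if $p$ is labeled iff $q$ is labeled, and then $\mathcal{L}_H(p)=\mathcal{L}_G(q)$ and $\mathcal{S}_H(p)=\tau^*(\mathcal{S}_G(q))$. A rewrite rule is a tuple $(L,R,\tau,\sigma)$ with $L,R$ graphs, $\tau:|L|\to|R|$ a function, and $\sigma:|R|\rightharpoonup|L|$ a partial function such that each $n\in\mathrm{dom}(\sigma)$ is unlabeled or is a $\tau$-clone of $\sigma(n)$. A matching with respect to $T=(L,R,\tau,\sigma)$ is a graph morphism $m:L\to G$ such that whenever $m(p)=m(p')$ for distinct nodes $p,p'$ of $L$, then $\tau(p),\tau(p')\in\mathrm{dom}(\sigma)$ and $\sigma(\tau(p))=\sigma(\tau(p'))$. *)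

theory Defs
  imports "HOL-Library.FuncSet"
begin

record ('n, 'f) tgraph =
  nodes :: "'n set"
  labeled :: "'n set"
  lab :: "'n \<Rightarrow> 'f"
  succ :: "'n \<Rightarrow> 'n list"

definition wf_graph :: "('f \<Rightarrow> nat) \<Rightarrow> ('n, 'f) tgraph \<Rightarrow> bool" where
  "wf_graph ar G \<longleftrightarrow> labeled G \<subseteq> nodes G \<and>
     (\<forall>n\<in>labeled G. set (succ G n) \<subseteq> nodes G \<and> length (succ G n) = ar (lab G n))"

definition graph_morphism ::
  "('f \<Rightarrow> nat) \<Rightarrow> ('a, 'f) tgraph \<Rightarrow> ('b, 'f) tgraph \<Rightarrow> ('a \<Rightarrow> 'b) \<Rightarrow> bool" where
  "graph_morphism ar G H g \<longleftrightarrow> wf_graph ar G \<and> wf_graph ar H \<and>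
     g \<in> nodes G \<rightarrow> nodes H \<and>
     (\<forall>n\<in>labeled G. g n \<in> labeled H \<and> lab H (g n) = lab G n \<and>
                     succ H (g n) = map g (succ G n))"

definition is_clone ::
  "('a, 'f) tgraph \<Rightarrow> ('b, 'f) tgraph \<Rightarrow> ('a \<Rightarrow> 'b) \<Rightarrow> 'b \<Rightarrow> 'a \<Rightarrow> bool" where
  "is_clone G H \<tau> p q \<longleftrightarrow> (p \<in> labeled H \<longleftrightarrow> q \<in> labeled G) \<and>
     (q \<in> labeled G \<longrightarrow> lab H p = lab G q \<and> succ H p = map \<tau> (succ G q))"

definition rewrite_rule ::
  "('f \<Rightarrow> nat) \<Rightarrow> ('l, 'f) tgraph \<Rightarrow> ('r, 'f) tgraph \<Rightarrow> ('l \<Rightarrow> 'r) \<Rightarrow> ('r \<Rightarrow> 'l option) \<Rightarrow> bool" where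
  "rewrite_rule ar L R \<tau> \<sigma> \<longleftrightarrow> wf_graph ar L \<and> wf_graph ar R \<and>
     \<tau> \<in> nodes L \<rightarrow> nodes R \<and> dom \<sigma> \<subseteq> nodes R \<and> ran \<sigma> \<subseteq> nodes L \<and>
     (\<forall>n\<in>dom \<sigma>. n \<notin> labeled R \<or> is_clone L R \<tau> n (the (\<sigma> n)))"

definition matching ::
  "('f \<Rightarrow> nat) \<Rightarrow> ('l, 'f) tgraph \<Rightarrow> ('r, 'f) tgraph \<Rightarrow> ('l \<Rightarrow> 'r) \<Rightarrow> ('r \<Rightarrow> 'l option)
    \<Rightarrow> ('g, 'f) tgraph \<Rightarrow> ('l \<Rightarrow> 'g) \<Rightarrow> bool" where
  "matching ar L R \<tau> \<sigma> G m \<longleftrightarrow> rewrite_rule ar L R \<tau> \<sigma> \<and> graph_morphism ar L G m \<and>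
     (\<forall>p\<in>nodes L. \<forall>p'\<in>nodes L. p \<noteq> p' \<and> m p = m p' \<longrightarrow>
        \<tau> p \<in> dom \<sigma> \<and> \<tau> p' \<in> dom \<sigma> \<and> \<sigma> (\<tau> p) = \<sigma> (\<tau> p'))"

text \<open>Pushout in the category of sets of f : A -> B and g : A -> C, with
  i : B -> P, j : C -> P. The universal property is required for all cocones
  into subsets of the type ('b + 'c) set, which contains (a copy of) the
  canonical pushout (quotient of B + C), so this characterises pushouts
  exactly (up to isomorphism).\<close>
definition set_pushout ::
  "'a set \<Rightarrow> 'b set \<Rightarrow> 'c set \<Rightarrow> ('a \<Rightarrow> 'b) \<Rightarrow> ('a \<Rightarrow> 'c) \<Rightarrow>
   'd set \<Rightarrow> ('b \<Rightarrow> 'd) \<Rightarrow> ('c \<Rightarrow> 'd) \<Rightarrow> bool" where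
  "set_pushout A B C f g P i j \<longleftrightarrow>
     f \<in> A \<rightarrow> B \<and> g \<in> A \<rightarrow> C \<and> i \<in> B \<rightarrow> P \<and> j \<in> C \<rightarrow> P \<and>
     (\<forall>a\<in>A. i (f a) = j (g a)) \<and>
     (\<forall>(Z :: ('b + 'c) set) i' j'. i' \<in> B \<rightarrow> Z \<and> j' \<in> C \<rightarrow> Z \<and> (\<forall>a\<in>A. i' (f a) = j' (g a)) \<longrightarrow>
        (\<exists>u. u \<in> P \<rightarrow> Z \<and> (\<forall>b\<in>B. u (i b) = i' b) \<and> (\<forall>c\<in>C. u (j c) = j' c) \<and>
             (\<forall>u'. u' \<in> P \<rightarrow> Z \<and> (\<forall>b\<in>B. u' (i b) = i' b) \<and> (\<forall>c\<in>C. u' (j c) = j' c)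
                   \<longrightarrow> (\<forall>p\<in>P. u' p = u p))))"

end

theory Submission
  imports Defs
begin

text \<open>In a pushout of sets every point lies in the image of one of the two legs, and two
  points are identified only if every boolean colouring of the legs that is compatible with
  the span agrees on them. Nodes of G outside the image of m are therefore never glued to
  anything. The matching condition says that distinct nodes of L glued by m are both sent
  into dom \<sigma> with the same \<sigma>-value; this makes the colourings "\<sigma> r = \<sigma> r0" and, for r0
  outside dom \<sigma>, "r = r0" compatible, which gives the remaining separation properties.\<close>

lemma set_pushout_cocone:
  assumes "set_pushout A B C f g P i j"
  shows "f \<in> A \<rightarrow> B" "i \<in> B \<rightarrow> P" "j \<in> C \<rightarrow> P" "\<forall>a\<in>A. i (f a) = j (g a)"
proof -
  have "f \<in> A \<rightarrow> B \<and> i \<in> B \<rightarrow> P \<and> j \<in> C \<rightarrow> P \<and> (\<forall>a\<in>A. i (f a) = j (g a))"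
    using assms unfolding set_pushout_def by (elim conjE) (intro conjI)
  then show "f \<in> A \<rightarrow> B" "i \<in> B \<rightarrow> P" "j \<in> C \<rightarrow> P" "\<forall>a\<in>A. i (f a) = j (g a)"
    by auto
qed

lemma set_pushout_colouring:
  fixes B :: "'b set" and C :: "'c set" and \<beta> :: "'b \<Rightarrow> bool" and \<gamma> :: "'c \<Rightarrow> bool"
  assumes po: "set_pushout A B C f g P i j"
    and compatible: "\<forall>a\<in>A. \<beta> (f a) = \<gamma> (g a)"
  obtains \<kappa> where "\<forall>b\<in>B. \<kappa> (i b) = \<beta> b" and "\<forall>c\<in>C. \<kappa> (j c) = \<gamma> c"
proof -
  \<comment> \<open>The universal property only speaks about cocones into subsets of 'b + 'c, so truth
      values are encoded as two distinct elements of that type.\<close>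
  define col :: "bool \<Rightarrow> 'b + 'c" where "col t = (if t then Inl undefined else Inr undefined)" for t
  have "\<exists>u. (\<forall>b\<in>B. u (i b) = col (\<beta> b)) \<and> (\<forall>c\<in>C. u (j c) = col (\<gamma> c))"
    using po compatible unfolding set_pushout_def
    apply (elim conjE)
    apply (drule spec[of _ UNIV], drule spec[of _ "col \<circ> \<beta>"], drule spec[of _ "col \<circ> \<gamma>"])
    by auto
  then obtain u where "\<forall>b\<in>B. u (i b) = col (\<beta> b)" "\<forall>c\<in>C. u (j c) = col (\<gamma> c)"
    by blast
  then show thesis
    by (intro that[of "isl \<circ> u"]) (simp_all add: col_def)
qed

text \<open>Both the constant map and the indicator of the joint image mediate the constant
  cocone, so uniqueness of the mediating map forces the joint image to be all of P.\<close>

lemma set_pushout_jointly_surjective: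
  fixes B :: "'b set" and C :: "'c set"
  assumes po: "set_pushout A B C f g P i j"
  shows "P \<subseteq> i ` B \<union> j ` C"
proof
  fix x assume x: "x \<in> P"
  define zero :: "'b + 'c" where "zero = Inl undefined"
  define ind :: "'d \<Rightarrow> 'b + 'c" where
    "ind p = (if p \<in> i ` B \<union> j ` C then zero else Inr undefined)" for p
  obtain u where unique: "\<And>u'. \<forall>b\<in>B. u' (i b) = zero \<Longrightarrow> \<forall>c\<in>C. u' (j c) = zero
      \<Longrightarrow> \<forall>p\<in>P. u' p = u p"
    using po unfolding set_pushout_def
    apply (elim conjE)
    apply (drule spec[of _ UNIV], drule spec[of _ "\<lambda>_. zero"], drule spec[of _ "\<lambda>_. zero"])
    by simp blast
  have "ind x = u x" and "zero = u x"
    using unique[of ind] unique[of "\<lambda>_. zero"] x by (auto simp: ind_def)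
  then have "ind x = zero"
    by simp
  then show "x \<in> i ` B \<union> j ` C"
    by (auto simp: ind_def zero_def split: if_splits)
qed

lemma set_pushout_eq_image_Un:
  assumes po: "set_pushout A B C f g P i j"
  shows "P = j ` (C - g ` A) \<union> i ` B"
proof (rule subset_antisym)
  note cocone = set_pushout_cocone[OF po]
  show "P \<subseteq> j ` (C - g ` A) \<union> i ` B"
  proof
    fix x assume "x \<in> P"
    then consider "x \<in> i ` B" | c where "c \<in> C" "x = j c"
      using set_pushout_jointly_surjective[OF po] by blast
    then show "x \<in> j ` (C - g ` A) \<union> i ` B"
    proof cases
      case (2 c)
      show ?thesis
      proof (cases "c \<in> g ` A")
        case True
        then obtain a where "a \<in> A" "c = g a" by blast
        then have "x = i (f a)" "f a \<in> B"
          using 2 cocone(1,4) by auto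
        then show ?thesis by blast
      qed (use 2 in blast)
    qed blast
  qed
  show "j ` (C - g ` A) \<union> i ` B \<subseteq> P"
    using cocone(2,3) by (auto simp: image_subset_iff_funcset[symmetric])
qed

lemma set_pushout_outside_image:
  assumes po: "set_pushout A B C f g P i j"
  shows set_pushout_outside_image_disjoint: "j ` (C - g ` A) \<inter> i ` B = {}"
    and set_pushout_inj_on_outside_image: "inj_on j (C - g ` A)"
proof -
  have apart: "j c \<notin> i ` B" "c' \<in> C \<Longrightarrow> c' \<noteq> c \<Longrightarrow> j c' \<noteq> j c" if c: "c \<in> C - g ` A" for c c'
  proof -
    have "\<forall>a\<in>A. False = (g a = c)"
      using c by blast
    then obtain \<kappa> where \<kappa>: "\<forall>b\<in>B. \<kappa> (i b) = False" "\<forall>c'\<in>C. \<kappa> (j c') = (c' = c)"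
      by (rule set_pushout_colouring[OF po, where \<beta> = "\<lambda>_. False" and \<gamma> = "\<lambda>c'. c' = c"])
    have "\<kappa> (j c)"
      using \<kappa>(2) c by simp
    then show "j c \<notin> i ` B"
      using \<kappa>(1) by auto
    show "j c' \<noteq> j c" if "c' \<in> C" "c' \<noteq> c"
    proof
      assume "j c' = j c"
      with \<open>\<kappa> (j c)\<close> have "\<kappa> (j c')" by simp
      with \<kappa>(2) that show False by blast
    qed
  qed
  show "j ` (C - g ` A) \<inter> i ` B = {}"
    using apart(1) by blast
  show "inj_on j (C - g ` A)"
    by (rule inj_onI) (metis DiffE apart(2))
qed

lemma set_pushout_fibre_invariant:
  fixes \<phi> :: "'b \<Rightarrow> bool"
  assumes po: "set_pushout A B C f g P i j"
    and invariant: "\<And>a a'. a \<in> A \<Longrightarrow> a' \<in> A \<Longrightarrow> g a = g a' \<Longrightarrow> \<phi> (f a) = \<phi> (f a')"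
    and b: "b \<in> B" "b' \<in> B" "i b = i b'"
  shows "\<phi> b = \<phi> b'"
proof -
  have "\<forall>a\<in>A. \<phi> (f a) = (\<exists>a'\<in>A. g a' = g a \<and> \<phi> (f a'))"
  proof
    fix a assume "a \<in> A"
    then show "\<phi> (f a) = (\<exists>a'\<in>A. g a' = g a \<and> \<phi> (f a'))"
      using invariant[of _ a] by blast
  qed
  then obtain \<kappa> where \<kappa>: "\<forall>b\<in>B. \<kappa> (i b) = \<phi> b"
    by (rule set_pushout_colouring[OF po, where \<beta> = \<phi> and \<gamma> = "\<lambda>c. \<exists>a\<in>A. g a = c \<and> \<phi> (f a)"])
  have "\<phi> b = \<kappa> (i b)" "\<phi> b' = \<kappa> (i b')"
    using \<kappa> b(1,2) by simp_all
  then show ?thesis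
    by (simp add: b(3))
qed

lemma ex1_partial_map_on_image:
  assumes constant_on_fibres: "\<And>n n'. n \<in> S \<Longrightarrow> n' \<in> S \<Longrightarrow> \<delta> n = \<delta> n' \<Longrightarrow> h n = h n'"
    and defined: "\<And>n. n \<in> S \<Longrightarrow> h n \<noteq> None"
  shows "\<exists>!s. dom s = \<delta> ` S \<and> (\<forall>n\<in>S. s (\<delta> n) = h n)"
proof (rule ex_ex1I)
  define s where "s y = (if y \<in> \<delta> ` S then h (inv_into S \<delta> y) else None)" for y
  have "s (\<delta> n) = h n" if "n \<in> S" for n
    using that constant_on_fibres[of "inv_into S \<delta> (\<delta> n)" n]
    by (simp add: s_def inv_into_into f_inv_into_f)
  moreover have "dom s = \<delta> ` S"
    using defined by (auto simp: s_def dom_def inv_into_into)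
  ultimately show "\<exists>s. dom s = \<delta> ` S \<and> (\<forall>n\<in>S. s (\<delta> n) = h n)"
    by blast
next
  fix s s' assume s: "dom s = \<delta> ` S \<and> (\<forall>n\<in>S. s (\<delta> n) = h n)"
    and s': "dom s' = \<delta> ` S \<and> (\<forall>n\<in>S. s' (\<delta> n) = h n)"
  show "s = s'"
  proof
    fix y show "s y = s' y"
    proof (cases "y \<in> \<delta> ` S")
      case True
      then show ?thesis
        using s s' by auto
    next
      case False
      then show ?thesis
        using s s' by (metis domIff)
    qed
  qed
qed

lemma matching_dom_subset_nodes:
  assumes "matching ar L R \<tau> \<sigma> G m"
  shows "dom \<sigma> \<subseteq> nodes R"
proof -
  have "rewrite_rule ar L R \<tau> \<sigma>"
    using assms unfolding matching_def by (elim conjE)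
  then show ?thesis
    unfolding rewrite_rule_def by (elim conjE)
qed

lemma matching_glued:
  assumes "matching ar L R \<tau> \<sigma> G m" "p \<in> nodes L" "p' \<in> nodes L" "m p = m p'"
  shows "p = p' \<or> \<tau> p \<in> dom \<sigma> \<and> \<tau> p' \<in> dom \<sigma> \<and> \<sigma> (\<tau> p) = \<sigma> (\<tau> p')"
proof -
  have "\<forall>p\<in>nodes L. \<forall>p'\<in>nodes L. p \<noteq> p' \<and> m p = m p' \<longrightarrow>
      \<tau> p \<in> dom \<sigma> \<and> \<tau> p' \<in> dom \<sigma> \<and> \<sigma> (\<tau> p) = \<sigma> (\<tau> p')"
    using assms(1) unfolding matching_def by (elim conjE)
  then show ?thesis
    using assms(2-4) by blast
qed

context
  fixes ar :: "'f \<Rightarrow> nat"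
    and L :: "('l, 'f) tgraph" and R :: "('r, 'f) tgraph" and G :: "('g, 'f) tgraph"
    and \<tau> :: "'l \<Rightarrow> 'r" and \<sigma> :: "'r \<Rightarrow> 'l option" and m :: "'l \<Rightarrow> 'g"
    and H :: "'h set" and \<tau>\<^sub>1 :: "'g \<Rightarrow> 'h" and \<delta> :: "'r \<Rightarrow> 'h"
  assumes match: "matching ar L R \<tau> \<sigma> G m"
    and po: "set_pushout (nodes L) (nodes R) (nodes G) \<tau> m H \<delta> \<tau>\<^sub>1"
begin

lemma pushout_glued_same_sigma:
  assumes "r \<in> nodes R" "r' \<in> nodes R" "\<delta> r = \<delta> r'"
  shows "\<sigma> r = \<sigma> r'"
proof -
  have invariant: "\<sigma> (\<tau> p) = \<sigma> r \<longleftrightarrow> \<sigma> (\<tau> p') = \<sigma> r"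
    if "p \<in> nodes L" "p' \<in> nodes L" "m p = m p'" for p p'
  proof (cases "p = p'")
    case False
    then have "\<sigma> (\<tau> p) = \<sigma> (\<tau> p')"
      using matching_glued[OF match that] by blast
    then show ?thesis
      by simp
  qed simp
  have "\<sigma> r = \<sigma> r \<longleftrightarrow> \<sigma> r' = \<sigma> r"
    by (rule set_pushout_fibre_invariant[where \<phi> = "\<lambda>x. \<sigma> x = \<sigma> r", OF po _ assms])
      (fact invariant)
  then show ?thesis
    by simp
qed

lemma pushout_glued_outside_dom:
  assumes "r \<in> nodes R" "r' \<in> nodes R" "r \<notin> dom \<sigma>" "\<delta> r = \<delta> r'"
  shows "r = r'"
proof -
  have invariant: "\<tau> p = r \<longleftrightarrow> \<tau> p' = r"
    if "p \<in> nodes L" "p' \<in> nodes L" "m p = m p'" for p p'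
  proof (cases "p = p'")
    case False
    then have "\<tau> p \<noteq> r" "\<tau> p' \<noteq> r"
      using matching_glued[OF match that] assms(3) by auto
    then show ?thesis
      by simp
  qed simp
  have "r = r \<longleftrightarrow> r' = r"
    by (rule set_pushout_fibre_invariant[where \<phi> = "\<lambda>x. x = r", OF po _ assms(1,2,4)])
      (fact invariant)
  then show ?thesis
    by simp
qed

lemma pushout_inj_on_outside_dom: "inj_on \<delta> (nodes R - dom \<sigma>)"
  by (rule inj_onI) (meson DiffE pushout_glued_outside_dom)

lemma pushout_image_outside_dom_disjoint: "\<delta> ` (nodes R - dom \<sigma>) \<inter> \<delta> ` dom \<sigma> = {}"
proof (rule equals0I)
  fix x assume "x \<in> \<delta> ` (nodes R - dom \<sigma>) \<inter> \<delta> ` dom \<sigma>"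
  then obtain r s where "r \<in> nodes R - dom \<sigma>" "s \<in> dom \<sigma>" "\<delta> r = \<delta> s"
    by (metis IntE imageE)
  moreover have "s \<in> nodes R"
    using matching_dom_subset_nodes[OF match] \<open>s \<in> dom \<sigma>\<close> by blast
  ultimately show False
    using pushout_glued_outside_dom by blast
qed

lemma pushout_ex1_partial_map:
  "\<exists>!\<sigma>\<^sub>1. dom \<sigma>\<^sub>1 = \<delta> ` dom \<sigma> \<and> (\<forall>n\<in>dom \<sigma>. \<sigma>\<^sub>1 (\<delta> n) = map_option m (\<sigma> n))"
proof (rule ex1_partial_map_on_image)
  show "map_option m (\<sigma> n) = map_option m (\<sigma> n')"
    if "n \<in> dom \<sigma>" "n' \<in> dom \<sigma>" "\<delta> n = \<delta> n'" for n n'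
    using pushout_glued_same_sigma matching_dom_subset_nodes[OF match] that by (metis subsetD)
qed auto

end

theorem proposition1:
  fixes ar :: "'f \<Rightarrow> nat"
    and L :: "('l, 'f) tgraph" and R :: "('r, 'f) tgraph" and G :: "('g, 'f) tgraph"
    and \<tau> :: "'l \<Rightarrow> 'r" and \<sigma> :: "'r \<Rightarrow> 'l option" and m :: "'l \<Rightarrow> 'g"
    and H :: "'h set" and \<tau>\<^sub>1 :: "'g \<Rightarrow> 'h" and \<delta> :: "'r \<Rightarrow> 'h"
  assumes match: "matching ar L R \<tau> \<sigma> G m"
    and po: "set_pushout (nodes L) (nodes R) (nodes G) \<tau> m H \<delta> \<tau>\<^sub>1"
  defines "\<Gamma> \<equiv> nodes G - m ` nodes L"
    and "\<Sigma> \<equiv> dom \<sigma>"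
    and "\<Delta> \<equiv> nodes R - dom \<sigma>"
  shows "H = \<tau>\<^sub>1 ` \<Gamma> \<union> \<delta> ` \<Delta> \<union> \<delta> ` \<Sigma> \<and>
         \<tau>\<^sub>1 ` \<Gamma> \<inter> \<delta> ` \<Delta> = {} \<and> \<tau>\<^sub>1 ` \<Gamma> \<inter> \<delta> ` \<Sigma> = {} \<and> \<delta> ` \<Delta> \<inter> \<delta> ` \<Sigma> = {} \<and>
         bij_betw \<tau>\<^sub>1 \<Gamma> (\<tau>\<^sub>1 ` \<Gamma>) \<and>
         bij_betw \<delta> \<Delta> (\<delta> ` \<Delta>) \<and>
         (\<forall>n\<in>\<Sigma>. \<forall>n'\<in>\<Sigma>. n \<noteq> n' \<and> \<delta> n = \<delta> n' \<longrightarrow> \<sigma> n = \<sigma> n') \<and>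
         (\<exists>!\<sigma>\<^sub>1 :: 'h \<Rightarrow> 'g option. dom \<sigma>\<^sub>1 = \<delta> ` \<Sigma> \<and>
              (\<forall>n\<in>\<Sigma>. \<sigma>\<^sub>1 (\<delta> n) = map_option m (\<sigma> n)))"
proof -
  have R_split: "nodes R = \<Delta> \<union> \<Sigma>"
    using matching_dom_subset_nodes[OF match] unfolding \<Delta>_def \<Sigma>_def by blast
  then have cover: "H = \<tau>\<^sub>1 ` \<Gamma> \<union> \<delta> ` \<Delta> \<union> \<delta> ` \<Sigma>"
    using set_pushout_eq_image_Un[OF po] unfolding \<Gamma>_def by (simp add: image_Un Un_assoc)
  have "\<tau>\<^sub>1 ` \<Gamma> \<inter> \<delta> ` nodes R = {}"
    unfolding \<Gamma>_def by (rule set_pushout_outside_image_disjoint[OF po])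
  then have "\<tau>\<^sub>1 ` \<Gamma> \<inter> \<delta> ` \<Delta> = {}" "\<tau>\<^sub>1 ` \<Gamma> \<inter> \<delta> ` \<Sigma> = {}"
    using R_split by blast+
  moreover have "inj_on \<tau>\<^sub>1 \<Gamma>"
    unfolding \<Gamma>_def by (rule set_pushout_inj_on_outside_image[OF po])
  moreover have "\<forall>n\<in>\<Sigma>. \<forall>n'\<in>\<Sigma>. n \<noteq> n' \<and> \<delta> n = \<delta> n' \<longrightarrow> \<sigma> n = \<sigma> n'"
    using pushout_glued_same_sigma[OF match po] R_split by blast
  ultimately show ?thesis
    using cover pushout_inj_on_outside_dom[OF match po]
      pushout_image_outside_dom_disjoint[OF match po] pushout_ex1_partial_map[OF match po]
    unfolding \<Delta>_def \<Sigma>_def by (simp add: inj_on_imp_bij_betw)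
qed

end
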